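(* Let $\{\phi_n\}_{n\in\mathbb{N}}\subset\mathcal{SA}_\Psi(\mathbb{C})$. Then there exists $\Phi\in\mathcal{SA}_\Psi(\ell^2,\ell^2)$ such that $\langle\Phi(z)e_i,e_j\rangle=\phi_i(z)\delta_{ij}$ for all $i,j\in\mathbb{N}$ and all $z\in\Omega$, where $\{e_i\}$ is the standard orthonormal basis of $\ell^2$.
   Context: Let $\Omega\subset\mathbb{C}^n$ be a bounded domain. A family $\Psi$ of functions $\Omega\to\mathbb{C}$ is a collection of test functions if $\sup_{\psi\in\Psi}|\psi(x)|<1$ for each $x\in\Omega$ and, for each finite $F\subset\Omega$, the restrictions $\{\psi|_F\}$ together with $1$ generate the algebra of all functions $F\to\mathbb{C}$. For a Hilbert space $\mathcal{E}$, a function $K:\Omega\times\Omega\to B(\mathcal{E})$ is a positive kernel if $\sum_{i,j=1}^n\langle K(x_i,x_j)e_j,e_i\rangle\ge 0$ for all finite choices of $x_i\in\Omega$, $e_i\in\mathcal{E}$; $\mathcal{H}(K)$ is its reproducing kernel Hilbert space. $K$ is $\Psi$-admissible if for each $\psi\in\Psi$ multiplication by $\psi$ is a contraction on $\mathcal{H}(K)$; $\mathcal{K}_\Psi(\mathcal{E})$ is the set of such kernels. For Hilbert spaces $\mathcal{U},\mathcal{Y}$, $H^\infty_\Psi(\mathcal{U},\mathcal{Y})$ is the set of $S:\Omega\to B(\mathcal{U},\mathcal{Y})$ for which there is $C\ge0$ with $(x,y)\mapsto(C^2I_{\mathcal{Y}}-S(x)S(y)^* )\otimes K(x,y)$ a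 positive $B(\mathcal{Y}\otimes\mathcal{Y})$-valued kernel for every $K\in\mathcal{K}_\Psi(\mathcal{Y})$; $\|S\|_\Psi$ is the infimum of such $C$, and $\mathcal{SA}_\Psi(\mathcal{U},\mathcal{Y})=\{S:\|S\|_\Psi\le1\}$ is the $\Psi$-Schur–Agler class; $\mathcal{SA}_\Psi(\mathbb{C})=\mathcal{SA}_\Psi(\mathbb{C},\mathbb{C})$. *)

theory Defs
  imports "HOL-Analysis.Analysis"
begin

text \<open>Hilbert spaces are modelled concretely as \<open>\<ell>\<^sup>2(I)\<close> for an index type \<open>'i\<close>
  (every Hilbert space is unitarily equivalent to such a space):
  \<open>\<complex> = \<ell>\<^sup>2(unit)\<close>, \<open>\<ell>\<^sup>2 = \<ell>\<^sup>2(nat)\<close>, \<open>\<ell>\<^sup>2(I) \<otimes> \<ell>\<^sup>2(J) = \<ell>\<^sup>2(I \<times> J)\<close>.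
  Bounded operators \<open>\<ell>\<^sup>2(J) \<rightarrow> \<ell>\<^sup>2(I)\<close> are represented by their matrices
  \<open>A i j = \<langle>A e_j, e_i\<rangle>\<close>.\<close>

type_synonym 'i vec = "'i \<Rightarrow> complex"
type_synonym ('i, 'j) mat = "'i \<Rightarrow> 'j \<Rightarrow> complex"

definition is_l2 :: "'i vec \<Rightarrow> bool" where
  "is_l2 v \<longleftrightarrow> (\<lambda>i. (cmod (v i))\<^sup>2) summable_on UNIV"

definition l2norm :: "'i vec \<Rightarrow> real" where
  "l2norm v = sqrt (\<Sum>\<^sub>\<infinity>i. (cmod (v i))\<^sup>2)"

definition cinner :: "'i vec \<Rightarrow> 'i vec \<Rightarrow> complex" where
  "cinner v w = (\<Sum>\<^sub>\<infinity>i. v i * cnj (w i))"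

definition std_basis :: "'i \<Rightarrow> 'i vec" where
  "std_basis k = (\<lambda>i. if i = k then 1 else 0)"

definition mat_app :: "('i, 'j) mat \<Rightarrow> 'j vec \<Rightarrow> 'i vec" where
  "mat_app A v = (\<lambda>i. \<Sum>\<^sub>\<infinity>j. A i j * v j)"

definition bounded_mat :: "('i, 'j) mat \<Rightarrow> bool" where
  "bounded_mat A \<longleftrightarrow> (\<exists>C. \<forall>v. is_l2 v \<longrightarrow>
      (\<forall>i. (\<lambda>j. A i j * v j) summable_on UNIV) \<and>
      is_l2 (mat_app A v) \<and> l2norm (mat_app A v) \<le> C * l2norm v)"

definition id_mat :: "('i, 'i) mat" where
  "id_mat = (\<lambda>i j. if i = j then 1 else 0)"

definition mat_adj :: "('i, 'j) mat \<Rightarrow> ('j, 'i) mat" where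
  "mat_adj A = (\<lambda>j i. cnj (A i j))"

definition mat_mult :: "('i, 'j) mat \<Rightarrow> ('j, 'k) mat \<Rightarrow> ('i, 'k) mat" where
  "mat_mult A B = (\<lambda>i k. \<Sum>\<^sub>\<infinity>j. A i j * B j k)"

definition mat_scale :: "complex \<Rightarrow> ('i, 'j) mat \<Rightarrow> ('i, 'j) mat" where
  "mat_scale c A = (\<lambda>i j. c * A i j)"

definition mat_diff :: "('i, 'j) mat \<Rightarrow> ('i, 'j) mat \<Rightarrow> ('i, 'j) mat" where
  "mat_diff A B = (\<lambda>i j. A i j - B i j)"

definition mat_tensor :: "('i, 'j) mat \<Rightarrow> ('i2, 'j2) mat \<Rightarrow> ('i \<times> 'i2, 'j \<times> 'j2) mat" where
  "mat_tensor A B = (\<lambda>(i, i') (j, j'). A i j * B i' j')"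

definition pos_kernel :: "'a set \<Rightarrow> ('a \<Rightarrow> 'a \<Rightarrow> ('i, 'i) mat) \<Rightarrow> bool" where
  "pos_kernel \<Omega> K \<longleftrightarrow>
     (\<forall>x\<in>\<Omega>. \<forall>y\<in>\<Omega>. bounded_mat (K x y)) \<and>
     (\<forall>(n::nat) (x::nat \<Rightarrow> 'a) (e::nat \<Rightarrow> 'i vec).
        (\<forall>k<n. x k \<in> \<Omega> \<and> is_l2 (e k)) \<longrightarrow>
        (let s = (\<Sum>i<n. \<Sum>j<n. cinner (mat_app (K (x i) (x j)) (e j)) (e i))
         in Im s = 0 \<and> Re s \<ge> 0))"

text \<open>\<open>rkhs_ball \<Omega> K c f\<close>: the function \<open>f : \<Omega> \<rightarrow> \<ell>\<^sup>2(I)\<close> belongs to \<open>\<H>(K)\<close> with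
  \<open>\<parallel>f\<parallel>\<^sub>\<H>\<^sub>(\<^sub>K\<^sub>) \<le> c\<close>, i.e. \<open>|\<langle>f, g\<rangle>| \<le> c \<parallel>g\<parallel>\<close> for all \<open>g = \<Sum>\<^sub>j K(\<cdot>,x\<^sub>j) e\<^sub>j\<close> in the
  dense span of kernel functions (using the reproducing property
  \<open>\<langle>f, K(\<cdot>,x) e\<rangle> = \<langle>f(x), e\<rangle>\<close>).\<close>
definition rkhs_ball :: "'a set \<Rightarrow> ('a \<Rightarrow> 'a \<Rightarrow> ('i, 'i) mat) \<Rightarrow> real \<Rightarrow> ('a \<Rightarrow> 'i vec) \<Rightarrow> bool" where
  "rkhs_ball \<Omega> K c f \<longleftrightarrow>
     (\<forall>x\<in>\<Omega>. is_l2 (f x)) \<and>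
     (\<forall>(n::nat) (x::nat \<Rightarrow> 'a) (e::nat \<Rightarrow> 'i vec).
        (\<forall>k<n. x k \<in> \<Omega> \<and> is_l2 (e k)) \<longrightarrow>
        (cmod (\<Sum>k<n. cinner (f (x k)) (e k)))\<^sup>2 \<le>
          c\<^sup>2 * Re (\<Sum>i<n. \<Sum>j<n. cinner (mat_app (K (x i) (x j)) (e j)) (e i)))"

definition mult_contraction :: "'a set \<Rightarrow> ('a \<Rightarrow> 'a \<Rightarrow> ('i, 'i) mat) \<Rightarrow> ('a \<Rightarrow> complex) \<Rightarrow> bool" where
  "mult_contraction \<Omega> K \<psi> \<longleftrightarrow>
     (\<forall>c f. c \<ge> 0 \<longrightarrow> rkhs_ball \<Omega> K c f \<longrightarrow>
        rkhs_ball \<Omega> K c (\<lambda>x. (\<lambda>i. \<psi> x * f x i)))"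

definition admissible_kernels :: "'a set \<Rightarrow> ('a \<Rightarrow> complex) set \<Rightarrow> ('a \<Rightarrow> 'a \<Rightarrow> ('i, 'i) mat) set" where
  "admissible_kernels \<Omega> \<Psi> =
     {K. pos_kernel \<Omega> K \<and> (\<forall>\<psi>\<in>\<Psi>. mult_contraction \<Omega> K \<psi>)}"

inductive gen_alg :: "('a \<Rightarrow> complex) set \<Rightarrow> ('a \<Rightarrow> complex) \<Rightarrow> bool" for \<Psi> where
  gen_const: "gen_alg \<Psi> (\<lambda>_. c)"
| gen_base: "\<psi> \<in> \<Psi> \<Longrightarrow> gen_alg \<Psi> \<psi>"
| gen_add: "gen_alg \<Psi> f \<Longrightarrow> gen_alg \<Psi> g \<Longrightarrow> gen_alg \<Psi> (\<lambda>x. f x + g x)"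
| gen_mult: "gen_alg \<Psi> f \<Longrightarrow> gen_alg \<Psi> g \<Longrightarrow> gen_alg \<Psi> (\<lambda>x. f x * g x)"

definition test_functions :: "'a set \<Rightarrow> ('a \<Rightarrow> complex) set \<Rightarrow> bool" where
  "test_functions \<Omega> \<Psi> \<longleftrightarrow>
     (\<forall>x\<in>\<Omega>. \<exists>r<1. \<forall>\<psi>\<in>\<Psi>. cmod (\<psi> x) \<le> r) \<and>
     (\<forall>F. finite F \<and> F \<subseteq> \<Omega> \<longrightarrow>
        (\<forall>g::'a \<Rightarrow> complex. \<exists>h. gen_alg \<Psi> h \<and> (\<forall>x\<in>F. h x = g x)))"

definition Hinf_bounds :: "'a set \<Rightarrow> ('a \<Rightarrow> complex) set \<Rightarrow> ('a \<Rightarrow> ('y, 'u) mat) \<Rightarrow> real set" where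
  "Hinf_bounds \<Omega> \<Psi> S =
     {C. C \<ge> 0 \<and>
        (\<forall>K \<in> admissible_kernels \<Omega> \<Psi>.
           pos_kernel \<Omega> (\<lambda>x y. mat_tensor
               (mat_diff (mat_scale (complex_of_real (C\<^sup>2)) id_mat) (mat_mult (S x) (mat_adj (S y))))
               (K x y :: ('y, 'y) mat)))}"

definition Hinf :: "'a set \<Rightarrow> ('a \<Rightarrow> complex) set \<Rightarrow> ('a \<Rightarrow> ('y, 'u) mat) set" where
  "Hinf \<Omega> \<Psi> = {S. (\<forall>x\<in>\<Omega>. bounded_mat (S x)) \<and> Hinf_bounds \<Omega> \<Psi> S \<noteq> {}}"

definition Hinf_norm :: "'a set \<Rightarrow> ('a \<Rightarrow> complex) set \<Rightarrow> ('a \<Rightarrow> ('y, 'u) mat) \<Rightarrow> real" where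
  "Hinf_norm \<Omega> \<Psi> S = Inf (Hinf_bounds \<Omega> \<Psi> S)"

definition schur_agler :: "'a set \<Rightarrow> ('a \<Rightarrow> complex) set \<Rightarrow> ('a \<Rightarrow> ('y, 'u) mat) set" where
  "schur_agler \<Omega> \<Psi> = {S. S \<in> Hinf \<Omega> \<Psi> \<and> Hinf_norm \<Omega> \<Psi> S \<le> 1}"

definition scalar_op :: "('a \<Rightarrow> complex) \<Rightarrow> ('a \<Rightarrow> (unit, unit) mat)" where
  "scalar_op \<phi> = (\<lambda>x _ _. \<phi> x)"

end

theory Submission
  imports Defs
begin

text \<open>
  Take \<open>\<Phi>(z) = diag(\<phi>\<^sub>i(z))\<close>. Testing a scalar Schur--Agler function against the admissible
  kernel concentrated at a single point gives \<open>|\<phi>\<^sub>i| \<le> 1\<close>, so \<open>\<Phi>(z)\<close> is bounded. For the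
  bound \<open>\<parallel>\<Phi>\<parallel>\<^sub>\<Psi> \<le> 1\<close>, the kernel \<open>(I - \<Phi>(x) \<Phi>(y)\<^sup>*) \<otimes> K(x, y)\<close> splits along the diagonal
  into the kernels \<open>(1 - \<phi>\<^sub>i(x) \<phi>\<^sub>i(y)\<^sup>*) K(x, y)\<close>. Each of these is positive: compressing the
  admissible kernel \<open>K\<close> along a vector field yields an admissible scalar kernel \<open>k\<close> (a contractive
  multiplier \<open>\<psi>\<close> makes \<open>(1 - \<psi>(x) \<psi>(y)\<^sup>*) K(x, y)\<close> positive, by the reproducing property and
  Cauchy--Schwarz), and \<open>(1 - \<phi>(x) \<phi>(y)\<^sup>*) k(x, y)\<close> is positive because \<open>\<phi>\<close> has Schur--Agler
  norm at most \<open>1\<close>.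
\<close>

lemma summable_on_sum:
  fixes f :: "'b \<Rightarrow> 'a \<Rightarrow> complex"
  assumes "finite B" "\<And>b. b \<in> B \<Longrightarrow> f b summable_on A"
  shows "(\<lambda>x. \<Sum>b\<in>B. f b x) summable_on A"
  using assms by (induction B rule: finite_induct) (auto intro: summable_on_add)

lemma infsum_sum:
  fixes f :: "'b \<Rightarrow> 'a \<Rightarrow> complex"
  assumes "finite B" "\<And>b. b \<in> B \<Longrightarrow> f b summable_on A"
  shows "(\<Sum>\<^sub>\<infinity>x\<in>A. \<Sum>b\<in>B. f b x) = (\<Sum>b\<in>B. \<Sum>\<^sub>\<infinity>x\<in>A. f b x)"
  using assms by (induction B rule: finite_induct) (auto simp: infsum_add summable_on_sum)

lemma infsum_eq_single:
  fixes f :: "'a \<Rightarrow> complex"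
  assumes "\<And>j. j \<noteq> a \<Longrightarrow> f j = 0"
  shows "(\<Sum>\<^sub>\<infinity>j. f j) = f a"
  using infsum_cong_neutral[of "{a}" UNIV f f] assms by simp

section \<open>Square-summable vectors\<close>

lemma is_l2_summable_on: "is_l2 v \<Longrightarrow> (\<lambda>i. (cmod (v i))\<^sup>2) summable_on A"
  unfolding is_l2_def by (rule summable_on_subset[of _ UNIV]) auto

lemma summable_on_mult_l2:
  assumes "is_l2 u" "is_l2 w"
  shows "(\<lambda>i. u i * w i) summable_on A"
proof -
  have "(\<lambda>i. norm (u i * w i)) summable_on A"
  proof (rule summable_on_comparison_test)
    show "(\<lambda>i. (cmod (u i))\<^sup>2 + (cmod (w i))\<^sup>2) summable_on A"
      using is_l2_summable_on[OF assms(1)] is_l2_summable_on[OF assms(2)] by (rule summable_on_add)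
    show "norm (u i * w i) \<le> (cmod (u i))\<^sup>2 + (cmod (w i))\<^sup>2" for i
      using sum_squares_bound[of "cmod (u i)" "cmod (w i)"]
        mult_nonneg_nonneg[OF norm_ge_zero norm_ge_zero, of "u i" "w i"]
      unfolding norm_mult by linarith
  qed simp
  then show ?thesis
    using summable_on_iff_abs_summable_on_complex by blast
qed

lemma is_l2_cnj: "is_l2 u \<Longrightarrow> is_l2 (\<lambda>i. cnj (u i))"
  unfolding is_l2_def by simp

lemma is_l2_scale: "is_l2 u \<Longrightarrow> is_l2 (\<lambda>i. c * u i)"
  unfolding is_l2_def by (simp add: norm_mult power_mult_distrib summable_on_cmult_right)

lemma is_l2_add:
  assumes "is_l2 u" "is_l2 w"
  shows "is_l2 (\<lambda>i. u i + w i)"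
  unfolding is_l2_def
proof (rule summable_on_comparison_test)
  show "(\<lambda>i. 2 * (cmod (u i))\<^sup>2 + 2 * (cmod (w i))\<^sup>2) summable_on UNIV"
    using assms unfolding is_l2_def by (intro summable_on_add summable_on_cmult_right)
  fix i
  have "(cmod (u i + w i))\<^sup>2 \<le> (cmod (u i) + cmod (w i))\<^sup>2"
    by (intro power_mono norm_triangle_ineq) simp
  also have "\<dots> \<le> 2 * (cmod (u i))\<^sup>2 + 2 * (cmod (w i))\<^sup>2"
    using sum_squares_bound[of "cmod (u i)" "cmod (w i)"] unfolding power2_sum by linarith
  finally show "(cmod (u i + w i))\<^sup>2 \<le> 2 * (cmod (u i))\<^sup>2 + 2 * (cmod (w i))\<^sup>2" .
qed simp

lemma is_l2_sum:
  assumes "finite B" "\<And>b. b \<in> B \<Longrightarrow> is_l2 (f b)"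
  shows "is_l2 (\<lambda>i. \<Sum>b\<in>B. f b i)"
  using assms
  by (induction B rule: finite_induct) (simp_all add: is_l2_def[of "\<lambda>_. 0"] is_l2_add)

lemma is_l2_finite: "is_l2 (v :: 'i::finite vec)"
  unfolding is_l2_def by simp

lemma is_l2_slice: "is_l2 v \<Longrightarrow> is_l2 (\<lambda>j. v (i, j))"
  unfolding is_l2_def
  using summable_on_reindex[of "Pair i" UNIV "\<lambda>p. (cmod (v p))\<^sup>2"]
    summable_on_subset[of "\<lambda>p. (cmod (v p))\<^sup>2" UNIV "range (Pair i)"]
  by (simp add: o_def inj_on_def)

lemma l2norm_square: "(l2norm v)\<^sup>2 = (\<Sum>\<^sub>\<infinity>i. (cmod (v i))\<^sup>2)"
  unfolding l2norm_def by (simp add: infsum_nonneg)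

lemma l2norm_nonneg: "0 \<le> l2norm v"
  unfolding l2norm_def by (simp add: infsum_nonneg)

lemma l2norm_scale: "l2norm (\<lambda>i. c * v i) = cmod c * l2norm v"
  unfolding l2norm_def by (simp add: norm_mult power_mult_distrib infsum_cmult_right' real_sqrt_mult)

lemma l2norm_square_slices:
  assumes "is_l2 v"
  shows "(\<lambda>i. (l2norm (\<lambda>j. v (i, j)))\<^sup>2) summable_on UNIV"
    and "(\<Sum>\<^sub>\<infinity>i. (l2norm (\<lambda>j. v (i, j)))\<^sup>2) = (l2norm v)\<^sup>2"
proof -
  have "(\<lambda>(i, j). (cmod (v (i, j)))\<^sup>2) = (\<lambda>p. (cmod (v p))\<^sup>2)"
    by auto
  then have v: "(\<lambda>(i, j). (cmod (v (i, j)))\<^sup>2) summable_on Sigma UNIV (\<lambda>_. UNIV)"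
    using assms unfolding is_l2_def by simp
  show "(\<lambda>i. (l2norm (\<lambda>j. v (i, j)))\<^sup>2) summable_on UNIV"
    using summable_on_Sigma_banach[OF v] unfolding l2norm_square by simp
  show "(\<Sum>\<^sub>\<infinity>i. (l2norm (\<lambda>j. v (i, j)))\<^sup>2) = (l2norm v)\<^sup>2"
    using infsum_Sigma'_banach[OF v] unfolding l2norm_square \<open>(\<lambda>(i, j). _) = _\<close> by simp
qed

lemma is_l2_from_slices:
  assumes "\<And>i. is_l2 (\<lambda>j. v (i, j))" "(\<lambda>i. (l2norm (\<lambda>j. v (i, j)))\<^sup>2) summable_on UNIV"
  shows "is_l2 v"
proof -
  have "(\<lambda>(i, j). (cmod (v (i, j)))\<^sup>2) summable_on Sigma UNIV (\<lambda>_. UNIV)"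
    using assms(1)
    by (intro summable_on_SigmaI[OF _ assms(2)]) (auto simp: is_l2_def l2norm_square)
  moreover have "(\<lambda>(i, j). (cmod (v (i, j)))\<^sup>2) = (\<lambda>p. (cmod (v p))\<^sup>2)"
    by auto
  ultimately show ?thesis
    unfolding is_l2_def by simp
qed

lemma l2norm_le_from_slices:
  fixes w :: "('k \<times> 'j) vec" and v :: "('k \<times> 'i) vec"
  assumes v: "is_l2 v" and "0 \<le> B" and w: "\<And>i. is_l2 (\<lambda>j. w (i, j))"
    and slice_le: "\<And>i. l2norm (\<lambda>j. w (i, j)) \<le> B * l2norm (\<lambda>j. v (i, j))"
  shows "is_l2 w" and "l2norm w \<le> B * l2norm v"
proof -
  have square_le: "(l2norm (\<lambda>j. w (i, j)))\<^sup>2 \<le> B\<^sup>2 * (l2norm (\<lambda>j. v (i, j)))\<^sup>2" for i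
    using power_mono[OF slice_le l2norm_nonneg] by (simp add: power_mult_distrib)
  have summable: "(\<lambda>i. (l2norm (\<lambda>j. w (i, j)))\<^sup>2) summable_on UNIV"
    using l2norm_square_slices(1)[OF v]
    by (intro summable_on_comparison_test[OF summable_on_cmult_right square_le]) auto
  show l2: "is_l2 w"
    by (rule is_l2_from_slices[OF w summable])
  have "(l2norm w)\<^sup>2 = (\<Sum>\<^sub>\<infinity>i. (l2norm (\<lambda>j. w (i, j)))\<^sup>2)"
    using l2norm_square_slices(2)[OF l2] by simp
  also have "\<dots> \<le> (\<Sum>\<^sub>\<infinity>i. B\<^sup>2 * (l2norm (\<lambda>j. v (i, j)))\<^sup>2)"
    using l2norm_square_slices(1)[OF v]
    by (intro infsum_mono[OF summable summable_on_cmult_right square_le])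
  also have "\<dots> = (B * l2norm v)\<^sup>2"
    by (simp add: infsum_cmult_right' l2norm_square_slices(2)[OF v] power_mult_distrib)
  finally show "l2norm w \<le> B * l2norm v"
    by (rule power2_le_imp_le) (simp add: \<open>0 \<le> B\<close> l2norm_nonneg)
qed

lemma cinner_add_left:
  assumes "is_l2 u" "is_l2 w" "is_l2 v"
  shows "cinner (\<lambda>i. u i + w i) v = cinner u v + cinner w v"
  unfolding cinner_def distrib_right
  by (intro infsum_add summable_on_mult_l2 assms is_l2_cnj)

lemma cinner_add_right:
  assumes "is_l2 u" "is_l2 w" "is_l2 v"
  shows "cinner v (\<lambda>i. u i + w i) = cinner v u + cinner v w"
  unfolding cinner_def complex_cnj_add distrib_left
  by (intro infsum_add summable_on_mult_l2 assms is_l2_cnj)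

lemma cinner_scale_left: "cinner (\<lambda>i. c * u i) v = c * cinner u v"
  unfolding cinner_def by (simp add: mult.assoc infsum_cmult_right')

lemma cinner_scale_right: "cinner u (\<lambda>i. c * v i) = cnj c * cinner u v"
  unfolding cinner_def by (simp add: algebra_simps infsum_cmult_right' flip: infsum_cmult_right')

lemma cinner_sum_left:
  assumes "finite B" "\<And>b. b \<in> B \<Longrightarrow> is_l2 (f b)" "is_l2 v"
  shows "cinner (\<lambda>i. \<Sum>b\<in>B. f b i) v = (\<Sum>b\<in>B. cinner (f b) v)"
  using assms
  by (induction B rule: finite_induct) (simp_all add: cinner_def[of "\<lambda>_. 0"] cinner_add_left is_l2_sum)

lemma cinner_sum_right:
  assumes "finite B" "\<And>b. b \<in> B \<Longrightarrow> is_l2 (f b)" "is_l2 v"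
  shows "cinner v (\<lambda>i. \<Sum>b\<in>B. f b i) = (\<Sum>b\<in>B. cinner v (f b))"
  using assms
  by (induction B rule: finite_induct) (simp_all add: cinner_def[of _ "\<lambda>_. 0"] cinner_add_right is_l2_sum)

lemma bounded_mat_is_l2: "bounded_mat A \<Longrightarrow> is_l2 v \<Longrightarrow> is_l2 (mat_app A v)"
  unfolding bounded_mat_def by blast

lemma bounded_matE:
  assumes "bounded_mat A"
  obtains C where "0 \<le> C" "\<And>v. is_l2 v \<Longrightarrow> l2norm (mat_app A v) \<le> C * l2norm v"
proof -
  obtain C where "\<And>v. is_l2 v \<Longrightarrow> l2norm (mat_app A v) \<le> C * l2norm v"
    using assms unfolding bounded_mat_def by blast
  then have "\<And>v. is_l2 v \<Longrightarrow> l2norm (mat_app A v) \<le> \<bar>C\<bar> * l2norm v"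
    using order.trans[OF _ mult_right_mono[OF abs_ge_self l2norm_nonneg]] by blast
  then show thesis
    using that[of "\<bar>C\<bar>"] by simp
qed

lemma bounded_mat_row_summable:
  "bounded_mat A \<Longrightarrow> is_l2 v \<Longrightarrow> (\<lambda>j. A i j * v j) summable_on UNIV"
  unfolding bounded_mat_def by blast

lemma mat_app_scale: "mat_app A (\<lambda>j. c * v j) = (\<lambda>i. c * mat_app A v i)"
  unfolding mat_app_def by (simp add: mult.left_commute infsum_cmult_right')

lemma mat_app_add:
  assumes "bounded_mat A" "is_l2 u" "is_l2 w"
  shows "mat_app A (\<lambda>j. u j + w j) = (\<lambda>i. mat_app A u i + mat_app A w i)"
  unfolding mat_app_def distrib_left
  by (intro ext infsum_add bounded_mat_row_summable assms)

lemma mat_app_sum: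
  assumes "bounded_mat A" "finite B" "\<And>b. b \<in> B \<Longrightarrow> is_l2 (f b)"
  shows "mat_app A (\<lambda>j. \<Sum>b\<in>B. f b j) = (\<lambda>i. \<Sum>b\<in>B. mat_app A (f b) i)"
  using assms(2,3)
proof (induction B rule: finite_induct)
  case empty
  then show ?case by (simp add: mat_app_def)
next
  case (insert b B)
  then show ?case
    by (simp add: mat_app_add[OF assms(1)] is_l2_sum)
qed

lemma cinner_mat_app_sum:
  assumes "bounded_mat M" "finite A" "finite B"
    and "\<And>a. a \<in> A \<Longrightarrow> is_l2 (w a)" "\<And>b. b \<in> B \<Longrightarrow> is_l2 (v b)"
  shows "cinner (mat_app M (\<lambda>j. \<Sum>b\<in>B. v b j)) (\<lambda>j. \<Sum>a\<in>A. w a j)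
           = (\<Sum>a\<in>A. \<Sum>b\<in>B. cinner (mat_app M (v b)) (w a))"
  using assms
  by (simp add: mat_app_sum cinner_sum_left cinner_sum_right bounded_mat_is_l2 is_l2_sum
      sum.swap[of _ B A])

section \<open>Positive kernels and the reproducing kernel Hilbert space\<close>

definition kernel_form :: "('a \<Rightarrow> 'a \<Rightarrow> ('i, 'i) mat) \<Rightarrow> nat \<Rightarrow> (nat \<Rightarrow> 'a) \<Rightarrow> (nat \<Rightarrow> 'i vec) \<Rightarrow> complex"
  where "kernel_form K n x e = (\<Sum>a<n. \<Sum>b<n. cinner (mat_app (K (x a) (x b)) (e b)) (e a))"

lemma pos_kernel_iff_kernel_form:
  "pos_kernel \<Omega> K \<longleftrightarrow> (\<forall>x\<in>\<Omega>. \<forall>y\<in>\<Omega>. bounded_mat (K x y)) \<and>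
     (\<forall>n x e. (\<forall>k<n. x k \<in> \<Omega> \<and> is_l2 (e k)) \<longrightarrow> 0 \<le> kernel_form K n x e)"
  unfolding pos_kernel_def kernel_form_def Let_def less_eq_complex_def by auto

lemma pos_kernel_bounded: "pos_kernel \<Omega> K \<Longrightarrow> x \<in> \<Omega> \<Longrightarrow> y \<in> \<Omega> \<Longrightarrow> bounded_mat (K x y)"
  unfolding pos_kernel_def by blast

lemma pos_kernel_form_nonneg:
  assumes "pos_kernel \<Omega> K" "\<And>k. k < n \<Longrightarrow> x k \<in> \<Omega>" "\<And>k. k < n \<Longrightarrow> is_l2 (e k)"
  shows "0 \<le> kernel_form K n x e"
  using assms unfolding pos_kernel_iff_kernel_form by simp

lemma rkhs_ball_iff_kernel_form:
  "rkhs_ball \<Omega> K c f \<longleftrightarrow> (\<forall>x\<in>\<Omega>. is_l2 (f x)) \<and>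
     (\<forall>n x e. (\<forall>k<n. x k \<in> \<Omega> \<and> is_l2 (e k)) \<longrightarrow>
        (cmod (\<Sum>k<n. cinner (f (x k)) (e k)))\<^sup>2 \<le> c\<^sup>2 * Re (kernel_form K n x e))"
  unfolding rkhs_ball_def kernel_form_def ..

lemma quadratic_nonneg_discriminant:
  fixes a b c :: real
  assumes "0 \<le> a" and nonneg: "\<And>s. 0 \<le> a * s\<^sup>2 - 2 * b * s + c"
  shows "b\<^sup>2 \<le> a * c"
proof (cases "a = 0")
  case True
  have "b = 0"
  proof (rule ccontr)
    assume "b \<noteq> 0"
    then have "- 2 * b * ((c + 1) / (2 * b)) + c = -1"
      by (simp add: field_simps)
    then show False
      using nonneg[of "(c + 1) / (2 * b)"] True by simp
  qed
  then show ?thesis using True by simp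
next
  case False
  then have "a > 0" using assms(1) by simp
  moreover have "a * (b / a)\<^sup>2 - 2 * b * (b / a) + c = c - b\<^sup>2 / a"
    using \<open>a > 0\<close> by (simp add: field_simps power2_eq_square)
  ultimately show ?thesis
    using nonneg[of "b / a"] by (simp add: pos_divide_le_eq mult.commute)
qed

lemma quadratic_form_cauchy_schwarz:
  fixes q1 q2 b b' :: complex
  assumes "0 \<le> q1" "0 \<le> q2" and nonneg: "\<And>t. 0 \<le> t * cnj t * q1 + cnj t * b' + t * b + q2"
  shows "(cmod b)\<^sup>2 \<le> Re q1 * Re q2"
proof -
  have real: "Im q1 = 0" "Im q2 = 0" "0 \<le> Re q1" "0 \<le> Re q2"
    using assms(1,2) by (auto simp: less_eq_complex_def)
  have "b' = cnj b"
    using nonneg[of 1] nonneg[of \<i>] real by (simp add: less_eq_complex_def complex_eq_iff)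
  then have form: "0 \<le> (cmod t)\<^sup>2 * Re q1 + 2 * Re (t * b) + Re q2" for t
    using nonneg[of t] real
    by (simp add: less_eq_complex_def complex_mult_cnj cmod_power2) (simp add: mult.commute)
  define \<beta> where "\<beta> = (cmod b)\<^sup>2"
  have "0 \<le> (\<beta> * Re q1) * s\<^sup>2 - 2 * \<beta> * s + Re q2" for s
  proof -
    have "(cmod (- (of_real s * cnj b)))\<^sup>2 = s\<^sup>2 * \<beta>"
      by (simp add: \<beta>_def norm_mult power_mult_distrib)
    moreover have "Re (- (of_real s * cnj b) * b) = - s * \<beta>"
      by (simp add: \<beta>_def cmod_power2) (simp add: power2_eq_square algebra_simps)
    ultimately show ?thesis
      using form[of "- (of_real s * cnj b)"] by (simp add: algebra_simps)
  qed
  then have "\<beta>\<^sup>2 \<le> (\<beta> * Re q1) * Re q2"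
    by (intro quadratic_nonneg_discriminant) (simp_all add: \<beta>_def real)
  then show ?thesis
    unfolding \<beta>_def using real
    by (cases "b = 0") (simp_all add: power2_eq_square mult.assoc)
qed

lemma sum_lessThan_add:
  fixes n m :: nat
  shows "(\<Sum>i<n + m. f i) = (\<Sum>i<n. f i) + (\<Sum>k<m. f (n + k))"
  by (induction m) (simp_all add: add.assoc)

lemma pos_kernel_cauchy_schwarz:
  assumes pk: "pos_kernel \<Omega> K"
    and x: "\<And>k. k < n \<Longrightarrow> x k \<in> \<Omega>" and e: "\<And>k. k < n \<Longrightarrow> is_l2 (e k)"
    and y: "\<And>k. k < m \<Longrightarrow> y k \<in> \<Omega>" and v: "\<And>k. k < m \<Longrightarrow> is_l2 (v k)"
  shows "(cmod (\<Sum>k<m. \<Sum>b<n. cinner (mat_app (K (y k) (x b)) (e b)) (v k)))\<^sup>2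
           \<le> Re (kernel_form K n x e) * Re (kernel_form K m y v)"
proof (rule quadratic_form_cauchy_schwarz)
  show "0 \<le> kernel_form K n x e" "0 \<le> kernel_form K m y v"
    using pk x e y v by (auto intro: pos_kernel_form_nonneg)
  fix t
  \<comment> \<open>positivity on the concatenated family \<open>(x, t e), (y, v)\<close> is the quadratic inequality in \<open>t\<close>\<close>
  define z where "z k = (if k < n then x k else y (k - n))" for k
  define w where "w k = (if k < n then (\<lambda>j. t * e k j) else v (k - n))" for k
  have "0 \<le> kernel_form K (n + m) z w"
    by (rule pos_kernel_form_nonneg[OF pk]) (auto simp: z_def w_def x y e v is_l2_scale)
  also have "kernel_form K (n + m) z w
      = t * cnj t * kernel_form K n x e
        + cnj t * (\<Sum>a<n. \<Sum>k<m. cinner (mat_app (K (x a) (y k)) (v k)) (e a))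
        + t * (\<Sum>k<m. \<Sum>b<n. cinner (mat_app (K (y k) (x b)) (e b)) (v k))
        + kernel_form K m y v"
    unfolding kernel_form_def sum_lessThan_add
    by (simp add: z_def w_def mat_app_scale cinner_scale_left cinner_scale_right
        sum.distrib sum_distrib_left algebra_simps)
  finally show "0 \<le> \<dots>" .
qed

lemma rkhs_ball_kernel_span:
  fixes K :: "'a \<Rightarrow> 'a \<Rightarrow> ('i, 'i) mat"
  assumes pk: "pos_kernel \<Omega> K"
    and x: "\<And>k. k < n \<Longrightarrow> x k \<in> \<Omega>" and e: "\<And>k. k < n \<Longrightarrow> is_l2 (e k)"
  shows "rkhs_ball \<Omega> K (sqrt (Re (kernel_form K n x e)))
           (\<lambda>z i. \<Sum>b<n. mat_app (K z (x b)) (e b) i)"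
  unfolding rkhs_ball_iff_kernel_form
proof (intro conjI ballI allI impI)
  show "is_l2 (\<lambda>i. \<Sum>b<n. mat_app (K z (x b)) (e b) i)" if "z \<in> \<Omega>" for z
    using that by (intro is_l2_sum bounded_mat_is_l2 pos_kernel_bounded[OF pk] x e) auto
  fix m :: nat and y :: "nat \<Rightarrow> 'a" and v :: "nat \<Rightarrow> 'i vec"
  assume yv: "\<forall>k<m. y k \<in> \<Omega> \<and> is_l2 (v k)"
  have "(\<Sum>k<m. cinner (\<lambda>i. \<Sum>b<n. mat_app (K (y k) (x b)) (e b) i) (v k))
      = (\<Sum>k<m. \<Sum>b<n. cinner (mat_app (K (y k) (x b)) (e b)) (v k))"
    using yv by (intro sum.cong refl cinner_sum_left)
      (auto intro: bounded_mat_is_l2 pos_kernel_bounded[OF pk] x e)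
  moreover have "0 \<le> Re (kernel_form K n x e)"
    using pos_kernel_form_nonneg[OF pk x e] by (simp add: less_eq_complex_def)
  ultimately show "(cmod (\<Sum>k<m. cinner (\<lambda>i. \<Sum>b<n. mat_app (K (y k) (x b)) (e b) i) (v k)))\<^sup>2
      \<le> (sqrt (Re (kernel_form K n x e)))\<^sup>2 * Re (kernel_form K m y v)"
    using pos_kernel_cauchy_schwarz[OF pk x e, where m=m and y=y and v=v] yv by simp
qed

text \<open>Apply the contraction to the kernel function \<open>h = \<Sum>\<^sub>b K(\<cdot>, x\<^sub>b) \<psi>(x\<^sub>b)\<^sup>* e\<^sub>b\<close>
  and test \<open>\<psi> h\<close> against the family \<open>e\<close> itself.\<close>

lemma mult_contraction_kernel_form_nonneg:
  fixes K :: "'a \<Rightarrow> 'a \<Rightarrow> ('i, 'i) mat" and n :: nat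
  assumes pk: "pos_kernel \<Omega> K" and mc: "mult_contraction \<Omega> K \<psi>"
    and x: "\<And>k. k < n \<Longrightarrow> x k \<in> \<Omega>" and e: "\<And>k. k < n \<Longrightarrow> is_l2 (e k)"
  shows "0 \<le> (\<Sum>a<n. \<Sum>b<n. (1 - \<psi> (x a) * cnj (\<psi> (x b))) *
                 cinner (mat_app (K (x a) (x b)) (e b)) (e a))"
proof -
  define e' where "e' b = (\<lambda>j. cnj (\<psi> (x b)) * e b j)" for b
  have e': "is_l2 (e' k)" if "k < n" for k
    unfolding e'_def using e[OF that] by (rule is_l2_scale)
  define P where "P = kernel_form K n x e'"
  define Q where "Q = kernel_form K n x e"
  have P: "0 \<le> P" and Q: "0 \<le> Q"
    unfolding P_def Q_def using pk x e e' by (auto intro: pos_kernel_form_nonneg)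
  define h where "h z = (\<lambda>i. \<Sum>b<n. mat_app (K z (x b)) (e' b) i)" for z
  have "rkhs_ball \<Omega> K (sqrt (Re P)) h"
    unfolding h_def P_def by (rule rkhs_ball_kernel_span[OF pk x e'])
  then have "rkhs_ball \<Omega> K (sqrt (Re P)) (\<lambda>z i. \<psi> z * h z i)"
    using mc P unfolding mult_contraction_def by (simp add: less_eq_complex_def)
  then have "(cmod (\<Sum>k<n. cinner (\<lambda>i. \<psi> (x k) * h (x k) i) (e k)))\<^sup>2 \<le> Re P * Re Q"
    using P x e unfolding rkhs_ball_iff_kernel_form Q_def by (simp add: less_eq_complex_def)
  also have "(\<Sum>k<n. cinner (\<lambda>i. \<psi> (x k) * h (x k) i) (e k)) = P"
  proof -
    have "cinner (\<lambda>i. \<psi> (x k) * h (x k) i) (e k)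
        = (\<Sum>b<n. cinner (mat_app (K (x k) (x b)) (e' b)) (e' k))" if "k < n" for k
      unfolding cinner_scale_left h_def e'_def[of k] cinner_scale_right
      using that
      by (subst cinner_sum_left)
        (auto simp: sum_distrib_left intro: bounded_mat_is_l2 pos_kernel_bounded[OF pk] x e e')
    then show ?thesis
      unfolding P_def kernel_form_def by (simp add: sum_distrib_left)
  qed
  finally have "(Re P)\<^sup>2 \<le> Re P * Re Q"
    using P by (simp add: less_eq_complex_def cmod_eq_Re)
  then have "P \<le> Q"
    using P Q by (cases "Re P = 0") (auto simp: less_eq_complex_def power2_eq_square)
  moreover have "(\<Sum>a<n. \<Sum>b<n. (1 - \<psi> (x a) * cnj (\<psi> (x b))) *
                 cinner (mat_app (K (x a) (x b)) (e b)) (e a)) = Q - P"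
    unfolding P_def Q_def kernel_form_def e'_def mat_app_scale cinner_scale_left cinner_scale_right
    by (simp add: algebra_simps sum_subtractf)
  ultimately show ?thesis by simp
qed

section \<open>Scalar kernels\<close>

definition scalar_kernel :: "('a \<Rightarrow> 'a \<Rightarrow> complex) \<Rightarrow> 'a \<Rightarrow> 'a \<Rightarrow> (unit, unit) mat"
  where "scalar_kernel k = (\<lambda>x y _ _. k x y)"

lemma cinner_mat_app_finite:
  fixes A :: "('i::finite, 'j::finite) mat"
  shows "cinner (mat_app A v) w = (\<Sum>i\<in>UNIV. \<Sum>j\<in>UNIV. A i j * v j * cnj (w i))"
  unfolding cinner_def mat_app_def by (simp add: sum_distrib_right)

lemma bounded_mat_unit: "bounded_mat (A :: (unit, unit) mat)"
  unfolding bounded_mat_def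
proof (intro exI allI impI conjI)
  fix v :: "unit vec"
  show "(\<lambda>j. A i j * v j) summable_on UNIV" for i by simp
  show "is_l2 (mat_app A v)" by (rule is_l2_finite)
  show "l2norm (mat_app A v) \<le> cmod (A () ()) * l2norm v"
    unfolding l2norm_def mat_app_def by (simp add: UNIV_unit norm_mult power_mult_distrib real_sqrt_mult)
qed

lemma kernel_form_scalar_kernel:
  "kernel_form (scalar_kernel k) n y e = (\<Sum>a<n. \<Sum>b<n. k (y a) (y b) * e b () * cnj (e a ()))"
  unfolding kernel_form_def cinner_mat_app_finite scalar_kernel_def by (simp add: UNIV_unit)

lemma pos_kernel_scalar_kernel_nonneg:
  fixes n :: nat
  assumes "pos_kernel \<Omega> (scalar_kernel k)" "\<And>a. a < n \<Longrightarrow> y a \<in> \<Omega>"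
  shows "0 \<le> (\<Sum>a<n. \<Sum>b<n. k (y a) (y b) * c b * cnj (c a))"
  using pos_kernel_form_nonneg[OF assms, where e="\<lambda>a _. c a"]
  by (simp add: kernel_form_scalar_kernel is_l2_finite)

lemma pos_kernel_scalar_kernelI:
  assumes "\<And>(n::nat) y c. (\<And>a. a < n \<Longrightarrow> y a \<in> \<Omega>) \<Longrightarrow>
             0 \<le> (\<Sum>a<n. \<Sum>b<n. k (y a) (y b) * c b * cnj (c a))"
  shows "pos_kernel \<Omega> (scalar_kernel k)"
  unfolding pos_kernel_iff_kernel_form kernel_form_scalar_kernel
proof (intro conjI ballI allI impI bounded_mat_unit)
  fix n x and e :: "nat \<Rightarrow> unit vec"
  assume "\<forall>k<n. x k \<in> \<Omega> \<and> is_l2 (e k)"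
  then show "0 \<le> (\<Sum>a<n. \<Sum>b<n. k (x a) (x b) * e b () * cnj (e a ()))"
    using assms[of n x "\<lambda>a. e a ()"] by simp
qed

lemma pos_kernel_scalar_kernel_finite_sum:
  assumes "pos_kernel \<Omega> (scalar_kernel k)" "finite P" "P \<subseteq> \<Omega>"
  shows "0 \<le> (\<Sum>p\<in>P. \<Sum>q\<in>P. k p q)"
proof -
  obtain h where h: "bij_betw h {..<card P} P"
    using ex_bij_betw_nat_finite[OF assms(2)] by (auto simp: lessThan_atLeast0)
  have "h i \<in> \<Omega>" if "i < card P" for i
    using bij_betw_apply[OF h] that assms(3) by auto
  from pos_kernel_scalar_kernel_nonneg[OF assms(1) this, where c="\<lambda>_. 1"]
  show ?thesis
    by (simp add: sum.reindex_bij_betw[OF h, symmetric])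
qed

lemma scalar_kernel_admissible:
  assumes pos: "pos_kernel \<Omega> (scalar_kernel k)"
    and defect: "\<And>\<psi>. \<psi> \<in> \<Psi> \<Longrightarrow> pos_kernel \<Omega> (scalar_kernel (\<lambda>x y. (1 - \<psi> x * cnj (\<psi> y)) * k x y))"
  shows "scalar_kernel k \<in> admissible_kernels \<Omega> \<Psi>"
  unfolding admissible_kernels_def mult_contraction_def
proof (intro CollectI conjI pos ballI allI impI)
  fix \<psi> c and f :: "'a \<Rightarrow> unit vec"
  assume \<psi>: "\<psi> \<in> \<Psi>" and "rkhs_ball \<Omega> (scalar_kernel k) c f"
  then have ball: "(cmod (\<Sum>a<m. cinner (f (y a)) (e a)))\<^sup>2 \<le> c\<^sup>2 * Re (kernel_form (scalar_kernel k) m y e)"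
    if "\<forall>a<m. y a \<in> \<Omega>" for m y e
    using that unfolding rkhs_ball_iff_kernel_form by (simp add: is_l2_finite)
  show "rkhs_ball \<Omega> (scalar_kernel k) c (\<lambda>x i. \<psi> x * f x i)"
    unfolding rkhs_ball_iff_kernel_form
  proof (intro conjI ballI allI impI is_l2_finite)
    fix m y and e :: "nat \<Rightarrow> unit vec"
    assume "\<forall>a<m. y a \<in> \<Omega> \<and> is_l2 (e a)"
    then have y: "\<forall>a<m. y a \<in> \<Omega>" by simp
    define e' where "e' a = (\<lambda>_::unit. cnj (\<psi> (y a)) * e a ())" for a
    have "(\<Sum>a<m. cinner (\<lambda>i. \<psi> (y a) * f (y a) i) (e a)) = (\<Sum>a<m. cinner (f (y a)) (e' a))"
      unfolding cinner_def e'_def by (simp add: algebra_simps)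
    then have "(cmod (\<Sum>a<m. cinner (\<lambda>i. \<psi> (y a) * f (y a) i) (e a)))\<^sup>2
        \<le> c\<^sup>2 * Re (kernel_form (scalar_kernel k) m y e')"
      using ball[OF y] by simp
    also have "\<dots> \<le> c\<^sup>2 * Re (kernel_form (scalar_kernel k) m y e)"
    proof (rule mult_left_mono)
      show "Re (kernel_form (scalar_kernel k) m y e') \<le> Re (kernel_form (scalar_kernel k) m y e)"
      proof -
        have "0 \<le> (\<Sum>a<m. \<Sum>b<m. (1 - \<psi> (y a) * cnj (\<psi> (y b))) * k (y a) (y b) *
            e b () * cnj (e a ()))"
          using pos_kernel_scalar_kernel_nonneg[OF defect[OF \<psi>]] y by simp
        also have "\<dots> = kernel_form (scalar_kernel k) m y e - kernel_form (scalar_kernel k) m y e'"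
          unfolding kernel_form_scalar_kernel e'_def by (simp add: sum_subtractf algebra_simps)
        finally show ?thesis by (simp add: less_eq_complex_def)
      qed
    qed simp
    finally show "(cmod (\<Sum>a<m. cinner (\<lambda>i. \<psi> (y a) * f (y a) i) (e a)))\<^sup>2
        \<le> c\<^sup>2 * Re (kernel_form (scalar_kernel k) m y e)" .
  qed
qed

lemma compressed_kernel_admissible:
  fixes K :: "'a \<Rightarrow> 'a \<Rightarrow> ('i, 'i) mat"
  assumes K: "K \<in> admissible_kernels \<Omega> \<Psi>" and u: "\<And>x. is_l2 (u x)"
  shows "scalar_kernel (\<lambda>x y. cinner (mat_app (K x y) (u y)) (u x)) \<in> admissible_kernels \<Omega> \<Psi>"
proof -
  have pk: "pos_kernel \<Omega> K" and mc: "\<And>\<psi>. \<psi> \<in> \<Psi> \<Longrightarrow> mult_contraction \<Omega> K \<psi>"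
    using K unfolding admissible_kernels_def by auto
  have compress: "(\<Sum>a<m. \<Sum>b<m. f a b * cinner (mat_app (K (y a) (y b)) (u (y b))) (u (y a)) * c b * cnj (c a))
      = (\<Sum>a<m. \<Sum>b<m. f a b * cinner (mat_app (K (y a) (y b)) (\<lambda>j. c b * u (y b) j)) (\<lambda>j. c a * u (y a) j))"
    for m :: nat and y c and f :: "nat \<Rightarrow> nat \<Rightarrow> complex"
    unfolding mat_app_scale cinner_scale_left cinner_scale_right by (simp add: algebra_simps)
  show ?thesis
  proof (rule scalar_kernel_admissible)
    show "pos_kernel \<Omega> (scalar_kernel (\<lambda>x y. cinner (mat_app (K x y) (u y)) (u x)))"
    proof (rule pos_kernel_scalar_kernelI)
      fix m :: nat and y c
      assume "\<And>a. a < m \<Longrightarrow> y a \<in> \<Omega>"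
      then have "0 \<le> kernel_form K m y (\<lambda>a j. c a * u (y a) j)"
        by (intro pos_kernel_form_nonneg[OF pk] is_l2_scale u)
      then show "0 \<le> (\<Sum>a<m. \<Sum>b<m. cinner (mat_app (K (y a) (y b)) (u (y b))) (u (y a)) * c b * cnj (c a))"
        using compress[where f="\<lambda>_ _. 1"] by (simp add: kernel_form_def)
    qed
    show "pos_kernel \<Omega> (scalar_kernel (\<lambda>x y. (1 - \<psi> x * cnj (\<psi> y)) *
            cinner (mat_app (K x y) (u y)) (u x)))" if "\<psi> \<in> \<Psi>" for \<psi>
    proof (rule pos_kernel_scalar_kernelI)
      fix m :: nat and y c
      assume "\<And>a. a < m \<Longrightarrow> y a \<in> \<Omega>"
      then have "0 \<le> (\<Sum>a<m. \<Sum>b<m. (1 - \<psi> (y a) * cnj (\<psi> (y b))) *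
          cinner (mat_app (K (y a) (y b)) (\<lambda>j. c b * u (y b) j)) (\<lambda>j. c a * u (y a) j))"
        by (intro mult_contraction_kernel_form_nonneg[OF pk mc[OF that]] is_l2_scale u)
      then show "0 \<le> (\<Sum>a<m. \<Sum>b<m. (1 - \<psi> (y a) * cnj (\<psi> (y b))) *
          cinner (mat_app (K (y a) (y b)) (u (y b))) (u (y a)) * c b * cnj (c a))"
        using compress[where f="\<lambda>a b. 1 - \<psi> (y a) * cnj (\<psi> (y b))"] by (simp add: mult.assoc)
    qed
  qed
qed

section \<open>Scalar Schur--Agler functions\<close>

lemma le_if_le_Inf_square_mult:
  fixes S :: "real set" and q r :: real
  assumes "S \<noteq> {}" "\<And>C. C \<in> S \<Longrightarrow> 0 \<le> C" "Inf S \<le> 1" "0 \<le> q"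
    and bound: "\<And>C. C \<in> S \<Longrightarrow> r \<le> C\<^sup>2 * q"
  shows "r \<le> q"
proof (cases "q = 0")
  case True
  then show ?thesis using bound \<open>S \<noteq> {}\<close> by fastforce
next
  case False
  then have "q > 0" using \<open>0 \<le> q\<close> by simp
  have "sqrt (r / q) \<le> C" if "C \<in> S" for C
  proof -
    have "sqrt (r / q) \<le> sqrt (C\<^sup>2)"
      using bound[OF that] \<open>q > 0\<close> by (intro real_sqrt_le_mono) (simp add: pos_divide_le_eq)
    then show ?thesis using assms(2)[OF that] by simp
  qed
  then have "sqrt (r / q) \<le> Inf S"
    by (rule cInf_greatest[OF \<open>S \<noteq> {}\<close>])
  then have "sqrt (r / q) \<le> 1" using \<open>Inf S \<le> 1\<close> by linarith
  then show ?thesis using \<open>q > 0\<close> by (simp add: pos_divide_le_eq)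
qed

lemma kernel_form_scalar_defect_tensor:
  "kernel_form (\<lambda>x y. mat_tensor (mat_diff (mat_scale (complex_of_real (C\<^sup>2)) id_mat)
       (mat_mult (scalar_op \<phi> x) (mat_adj (scalar_op \<phi> y)))) (scalar_kernel k x y)) n z (\<lambda>a _. c a)
   = of_real (C\<^sup>2) * (\<Sum>a<n. \<Sum>b<n. k (z a) (z b) * c b * cnj (c a))
     - (\<Sum>a<n. \<Sum>b<n. \<phi> (z a) * cnj (\<phi> (z b)) * k (z a) (z b) * c b * cnj (c a))"
  unfolding kernel_form_def cinner_mat_app_finite mat_tensor_def mat_diff_def mat_scale_def
    mat_mult_def mat_adj_def scalar_op_def scalar_kernel_def id_mat_def
  by (simp add: UNIV_unit sum_subtractf sum_distrib_left algebra_simps)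

lemma schur_agler_scalar_kernel_pos:
  assumes \<phi>: "scalar_op \<phi> \<in> schur_agler \<Omega> \<Psi>" and k: "scalar_kernel k \<in> admissible_kernels \<Omega> \<Psi>"
  shows "pos_kernel \<Omega> (scalar_kernel (\<lambda>x y. (1 - \<phi> x * cnj (\<phi> y)) * k x y))"
proof (rule pos_kernel_scalar_kernelI)
  fix n :: nat and z c
  assume z: "\<And>a. a < n \<Longrightarrow> z a \<in> \<Omega>"
  define Q where "Q = (\<Sum>a<n. \<Sum>b<n. k (z a) (z b) * c b * cnj (c a))"
  define R where "R = (\<Sum>a<n. \<Sum>b<n. \<phi> (z a) * cnj (\<phi> (z b)) * k (z a) (z b) * c b * cnj (c a))"
  define S where "S = Hinf_bounds \<Omega> \<Psi> (scalar_op \<phi>)"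
  have "0 \<le> Q"
    unfolding Q_def using k z by (auto simp: admissible_kernels_def intro: pos_kernel_scalar_kernel_nonneg)
  have bound: "0 \<le> of_real (C\<^sup>2) * Q - R" if "C \<in> S" for C
  proof -
    have "pos_kernel \<Omega> (\<lambda>x y. mat_tensor (mat_diff (mat_scale (complex_of_real (C\<^sup>2)) id_mat)
       (mat_mult (scalar_op \<phi> x) (mat_adj (scalar_op \<phi> y)))) (scalar_kernel k x y))"
      using that k unfolding S_def Hinf_bounds_def by blast
    from pos_kernel_form_nonneg[OF this z, where e="\<lambda>a _. c a"]
    show ?thesis
      unfolding kernel_form_scalar_defect_tensor Q_def R_def by (simp add: is_l2_finite)
  qed
  have "S \<noteq> {}" and "Inf S \<le> 1"
    using \<phi> unfolding schur_agler_def Hinf_def Hinf_norm_def S_def by auto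
  then obtain C0 where "C0 \<in> S" by blast
  have "Im R = 0"
    using bound[OF \<open>C0 \<in> S\<close>] \<open>0 \<le> Q\<close> by (simp add: less_eq_complex_def)
  have "Re R \<le> Re Q"
  proof (rule le_if_le_Inf_square_mult[OF \<open>S \<noteq> {}\<close> _ \<open>Inf S \<le> 1\<close>])
    show "0 \<le> C" if "C \<in> S" for C using that unfolding S_def Hinf_bounds_def by simp
    show "0 \<le> Re Q" using \<open>0 \<le> Q\<close> by (simp add: less_eq_complex_def)
    show "Re R \<le> C\<^sup>2 * Re Q" if "C \<in> S" for C
      using bound[OF that] by (simp add: less_eq_complex_def)
  qed
  then have "0 \<le> Q - R"
    using \<open>0 \<le> Q\<close> \<open>Im R = 0\<close> by (simp add: less_eq_complex_def)
  also have "Q - R = (\<Sum>a<n. \<Sum>b<n. (1 - \<phi> (z a) * cnj (\<phi> (z b))) * k (z a) (z b) * c b * cnj (c a))"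
    unfolding Q_def R_def by (simp add: sum_subtractf algebra_simps)
  finally show "0 \<le> \<dots>" .
qed

lemma pos_kernel_rank_one: "pos_kernel \<Omega> (scalar_kernel (\<lambda>x y. u x * cnj (u y)))"
proof (rule pos_kernel_scalar_kernelI)
  fix n :: nat and z c
  define s where "s = (\<Sum>b<n. cnj (u (z b)) * c b)"
  have "(\<Sum>a<n. \<Sum>b<n. u (z a) * cnj (u (z b)) * c b * cnj (c a))
      = (\<Sum>a<n. \<Sum>b<n. (u (z a) * cnj (c a)) * (cnj (u (z b)) * c b))"
    by (simp add: mult_ac)
  also have "\<dots> = cnj s * s"
    unfolding s_def sum_product[symmetric] by simp
  also have "\<dots> = s * cnj s"
    by (rule mult.commute)
  finally show "0 \<le> (\<Sum>a<n. \<Sum>b<n. u (z a) * cnj (u (z b)) * c b * cnj (c a))"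
    by (simp add: complex_mult_cnj less_eq_complex_def)
qed

lemma point_kernel_admissible:
  assumes "\<forall>\<psi>\<in>\<Psi>. cmod (\<psi> x\<^sub>0) \<le> 1"
  shows "scalar_kernel (\<lambda>x y. of_bool (x = x\<^sub>0 \<and> y = x\<^sub>0)) \<in> admissible_kernels \<Omega> \<Psi>"
proof (rule scalar_kernel_admissible)
  have "of_bool (x = x\<^sub>0 \<and> y = x\<^sub>0) = of_bool (x = x\<^sub>0) * cnj (of_bool (y = x\<^sub>0) :: complex)" for x y
    by simp
  then show "pos_kernel \<Omega> (scalar_kernel (\<lambda>x y. of_bool (x = x\<^sub>0 \<and> y = x\<^sub>0)))"
    by (simp only: pos_kernel_rank_one)
  fix \<psi> assume "\<psi> \<in> \<Psi>"
  \<comment> \<open>on its support the defect kernel is the constant \<open>1 - |\<psi>(x\<^sub>0)|\<^sup>2 \<ge> 0\<close>, so it is rank one\<close>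
  define s where "s = sqrt (1 - (cmod (\<psi> x\<^sub>0))\<^sup>2)"
  have "s\<^sup>2 = 1 - (cmod (\<psi> x\<^sub>0))\<^sup>2"
    unfolding s_def using assms \<open>\<psi> \<in> \<Psi>\<close> by (simp add: power_le_one)
  then have "of_real s * cnj (of_real s) = (of_real (1 - (cmod (\<psi> x\<^sub>0))\<^sup>2) :: complex)"
    by (metis complex_cnj_complex_of_real of_real_mult power2_eq_square)
  also have "\<dots> = 1 - \<psi> x\<^sub>0 * cnj (\<psi> x\<^sub>0)"
    by (simp only: of_real_diff of_real_1 complex_norm_square)
  finally have "of_real s * cnj (of_real s) = 1 - \<psi> x\<^sub>0 * cnj (\<psi> x\<^sub>0)" .
  then have "(1 - \<psi> x * cnj (\<psi> y)) * of_bool (x = x\<^sub>0 \<and> y = x\<^sub>0)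
      = of_real s * of_bool (x = x\<^sub>0) * cnj (of_real s * of_bool (y = x\<^sub>0))" for x y
    by auto
  then show "pos_kernel \<Omega> (scalar_kernel (\<lambda>x y. (1 - \<psi> x * cnj (\<psi> y)) * of_bool (x = x\<^sub>0 \<and> y = x\<^sub>0)))"
    by (simp only: pos_kernel_rank_one)
qed

lemma schur_agler_scalar_norm_le_one:
  assumes "scalar_op \<phi> \<in> schur_agler \<Omega> \<Psi>" "x\<^sub>0 \<in> \<Omega>" "\<forall>\<psi>\<in>\<Psi>. cmod (\<psi> x\<^sub>0) \<le> 1"
  shows "cmod (\<phi> x\<^sub>0) \<le> 1"
proof -
  have "pos_kernel \<Omega> (scalar_kernel (\<lambda>x y. (1 - \<phi> x * cnj (\<phi> y)) * of_bool (x = x\<^sub>0 \<and> y = x\<^sub>0)))"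
    by (rule schur_agler_scalar_kernel_pos[OF assms(1) point_kernel_admissible[OF assms(3)]])
  from pos_kernel_scalar_kernel_nonneg[OF this, where n=1 and y="\<lambda>_. x\<^sub>0" and c="\<lambda>_. 1"]
  have "0 \<le> 1 - \<phi> x\<^sub>0 * cnj (\<phi> x\<^sub>0)"
    using assms(2) by simp
  then have "(cmod (\<phi> x\<^sub>0))\<^sup>2 \<le> 1"
    by (simp add: less_eq_complex_def complex_mult_cnj cmod_power2)
  then show ?thesis
    by (simp add: abs_square_le_1)
qed

lemma schur_agler_kernel_form_nonneg:
  fixes K :: "'a \<Rightarrow> 'a \<Rightarrow> ('i, 'i) mat" and n :: nat
  assumes \<phi>: "scalar_op \<phi> \<in> schur_agler \<Omega> \<Psi>" and K: "K \<in> admissible_kernels \<Omega> \<Psi>"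
    and x: "\<And>a. a < n \<Longrightarrow> x a \<in> \<Omega>" and w: "\<And>a. a < n \<Longrightarrow> is_l2 (w a)"
  shows "0 \<le> (\<Sum>a<n. \<Sum>b<n. (1 - \<phi> (x a) * cnj (\<phi> (x b))) *
               cinner (mat_app (K (x a) (x b)) (w b)) (w a))"
proof -
  \<comment> \<open>merge the vectors sitting at the same point, so that they become a vector field on \<open>\<Omega>\<close>\<close>
  define P where "P = x ` {..<n}"
  define A where "A p = {a \<in> {..<n}. x a = p}" for p
  define W where "W p = (\<lambda>j. \<Sum>a\<in>A p. w a j)" for p
  define G where "G a b = (1 - \<phi> (x a) * cnj (\<phi> (x b))) * cinner (mat_app (K (x a) (x b)) (w b)) (w a)"
    for a b
  have W: "is_l2 (W p)" for p
    unfolding W_def A_def by (intro is_l2_sum) (auto intro: w)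
  have pk: "pos_kernel \<Omega> K"
    using K by (simp add: admissible_kernels_def)
  have group: "(\<Sum>p\<in>P. \<Sum>a\<in>A p. f a) = (\<Sum>a<n. f a)" for f :: "nat \<Rightarrow> complex"
    unfolding A_def P_def by (rule sum.group) auto
  have "pos_kernel \<Omega> (scalar_kernel (\<lambda>p q. (1 - \<phi> p * cnj (\<phi> q)) *
      cinner (mat_app (K p q) (W q)) (W p)))"
    by (intro schur_agler_scalar_kernel_pos[OF \<phi>] compressed_kernel_admissible[OF K W])
  then have "0 \<le> (\<Sum>p\<in>P. \<Sum>q\<in>P. (1 - \<phi> p * cnj (\<phi> q)) * cinner (mat_app (K p q) (W q)) (W p))"
    by (rule pos_kernel_scalar_kernel_finite_sum) (use x in \<open>auto simp: P_def\<close>)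
  also have "\<dots> = (\<Sum>p\<in>P. \<Sum>q\<in>P. \<Sum>a\<in>A p. \<Sum>b\<in>A q. G a b)"
  proof (intro sum.cong refl)
    fix p q assume "p \<in> P" "q \<in> P"
    then have "bounded_mat (K p q)"
      using pos_kernel_bounded[OF pk] x by (auto simp: P_def)
    then show "(1 - \<phi> p * cnj (\<phi> q)) * cinner (mat_app (K p q) (W q)) (W p) = (\<Sum>a\<in>A p. \<Sum>b\<in>A q. G a b)"
      unfolding W_def by (subst cinner_mat_app_sum) (auto simp: A_def G_def sum_distrib_left intro: w)
  qed
  also have "\<dots> = (\<Sum>p\<in>P. \<Sum>a\<in>A p. \<Sum>q\<in>P. \<Sum>b\<in>A q. G a b)"
    by (rule sum.cong[OF refl], rule sum.swap)
  also have "\<dots> = (\<Sum>a<n. \<Sum>b<n. G a b)"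
    by (simp only: group)
  finally show ?thesis
    unfolding G_def .
qed

section \<open>Diagonal operators\<close>

definition diag_mat :: "('k \<Rightarrow> complex) \<Rightarrow> ('k, 'k) mat"
  where "diag_mat d = (\<lambda>i j. if i = j then d i else 0)"

lemma mat_app_diag_mat: "mat_app (diag_mat d) v = (\<lambda>i. d i * v i)"
proof
  show "mat_app (diag_mat d) v i = d i * v i" for i
    unfolding mat_app_def diag_mat_def by (subst infsum_eq_single[where a=i]) auto
qed

lemma cinner_diag_mat_basis:
  "cinner (mat_app (diag_mat d) (std_basis i)) (std_basis j) = (if i = j then d i else 0)"
  unfolding mat_app_diag_mat cinner_def std_basis_def by (subst infsum_eq_single[where a=i]) auto

lemma bounded_diag_mat:
  fixes d :: "'k \<Rightarrow> complex"
  assumes "\<And>i. cmod (d i) \<le> M"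
  shows "bounded_mat (diag_mat d)"
  unfolding bounded_mat_def
proof (intro exI[of _ M] allI impI conjI)
  fix v :: "'k vec" and i
  assume v: "is_l2 v"
  show "(\<lambda>j. diag_mat d i j * v j) summable_on UNIV"
    using summable_on_cong_neutral[of "{i}" UNIV "\<lambda>j. diag_mat d i j * v j"]
    by (simp add: diag_mat_def)
  have le: "(cmod (d i * v i))\<^sup>2 \<le> M\<^sup>2 * (cmod (v i))\<^sup>2" for i
    using assms[of i] by (simp add: norm_mult power_mult_distrib mult_right_mono power_mono)
  have M: "0 \<le> M"
    using assms[of i] norm_ge_zero[of "d i"] by linarith
  have l2: "(\<lambda>i. (cmod (d i * v i))\<^sup>2) summable_on UNIV"
    using v unfolding is_l2_def
    by (intro summable_on_comparison_test[OF summable_on_cmult_right le]) auto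
  then show "is_l2 (mat_app (diag_mat d) v)"
    unfolding mat_app_diag_mat is_l2_def .
  have "(l2norm (mat_app (diag_mat d) v))\<^sup>2 \<le> (M * l2norm v)\<^sup>2"
    unfolding mat_app_diag_mat l2norm_square power_mult_distrib
    using infsum_mono[OF l2 summable_on_cmult_right le] v
    by (simp add: is_l2_def infsum_cmult_right)
  then show "l2norm (mat_app (diag_mat d) v) \<le> M * l2norm v"
    by (rule power2_le_imp_le) (simp add: M l2norm_nonneg)
qed

lemma tensor_diag_mat_row:
  fixes A :: "('i, 'i) mat" and v :: "('k \<times> 'i) vec"
  shows "(\<lambda>p. mat_tensor (diag_mat d) A (i, i') p * v p) summable_on UNIV
           \<longleftrightarrow> (\<lambda>j. d i * A i' j * v (i, j)) summable_on UNIV"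
    and "mat_app (mat_tensor (diag_mat d) A) v (i, i') = d i * mat_app A (\<lambda>j. v (i, j)) i'"
proof -
  define f where "f p = mat_tensor (diag_mat d) A (i, i') p * v p" for p
  have outside: "f p = 0" if "p \<notin> range (Pair i)" for p
    using that unfolding f_def mat_tensor_def diag_mat_def by (cases p) auto
  have row: "f \<circ> Pair i = (\<lambda>j. d i * A i' j * v (i, j))"
    unfolding f_def mat_tensor_def diag_mat_def by auto
  show "(\<lambda>p. mat_tensor (diag_mat d) A (i, i') p * v p) summable_on UNIV
           \<longleftrightarrow> (\<lambda>j. d i * A i' j * v (i, j)) summable_on UNIV"
    using summable_on_cong_neutral[of "range (Pair i)" UNIV f] outside
      summable_on_reindex[of "Pair i" UNIV f]
    unfolding row by (simp add: f_def[abs_def] inj_on_def)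
  have "mat_app (mat_tensor (diag_mat d) A) v (i, i') = infsum f (range (Pair i))"
    unfolding mat_app_def f_def[symmetric] by (rule infsum_cong_neutral) (use outside in auto)
  also have "\<dots> = (\<Sum>\<^sub>\<infinity>j. d i * (A i' j * v (i, j)))"
    by (subst infsum_reindex) (simp_all add: inj_on_def row mult.assoc)
  also have "\<dots> = d i * mat_app A (\<lambda>j. v (i, j)) i'"
    unfolding mat_app_def by (rule infsum_cmult_right')
  finally show "mat_app (mat_tensor (diag_mat d) A) v (i, i') = d i * mat_app A (\<lambda>j. v (i, j)) i'" .
qed

lemma bounded_mat_tensor_diag_mat:
  fixes A :: "('i, 'i) mat" and d :: "'k \<Rightarrow> complex"
  assumes A: "bounded_mat A" and d: "\<And>i. cmod (d i) \<le> M"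
  shows "bounded_mat (mat_tensor (diag_mat d) A)"
proof -
  obtain C where "0 \<le> C" and C: "\<And>v. is_l2 v \<Longrightarrow> l2norm (mat_app A v) \<le> C * l2norm v"
    using bounded_matE[OF A] by blast
  have "0 \<le> M"
    using d[of undefined] norm_ge_zero[of "d undefined"] by linarith
  show ?thesis
    unfolding bounded_mat_def
  proof (intro exI[of _ "M * C"] allI impI conjI)
    fix v :: "('k \<times> 'i) vec"
    assume v: "is_l2 v"
    show "(\<lambda>p. mat_tensor (diag_mat d) A q p * v p) summable_on UNIV" for q
    proof (cases q)
      case (Pair i i')
      have "(\<lambda>j. d i * (A i' j * v (i, j))) summable_on UNIV"
        by (rule summable_on_cmult_right[OF bounded_mat_row_summable[OF A is_l2_slice[OF v]]])
      then show ?thesis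
        unfolding Pair tensor_diag_mat_row(1) by (simp add: mult.assoc)
    qed
    have slice: "(\<lambda>i'. mat_app (mat_tensor (diag_mat d) A) v (i, i'))
        = (\<lambda>i'. d i * mat_app A (\<lambda>j. v (i, j)) i')" for i
      unfolding tensor_diag_mat_row(2) ..
    have slice_l2: "is_l2 (\<lambda>i'. mat_app (mat_tensor (diag_mat d) A) v (i, i'))" for i
      unfolding slice by (intro is_l2_scale bounded_mat_is_l2[OF A] is_l2_slice[OF v])
    have slice_le: "l2norm (\<lambda>i'. mat_app (mat_tensor (diag_mat d) A) v (i, i'))
        \<le> (M * C) * l2norm (\<lambda>j. v (i, j))" for i
      unfolding slice l2norm_scale mult.assoc
      using d[of i] C[OF is_l2_slice[OF v]] \<open>0 \<le> M\<close> by (intro mult_mono) (simp_all add: l2norm_nonneg)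
    show "is_l2 (mat_app (mat_tensor (diag_mat d) A) v)"
      and "l2norm (mat_app (mat_tensor (diag_mat d) A) v) \<le> M * C * l2norm v"
      using l2norm_le_from_slices[OF v _ slice_l2 slice_le] \<open>0 \<le> M\<close> \<open>0 \<le> C\<close> by simp_all
  qed
qed

lemma cinner_tensor_diag_mat:
  fixes A :: "('i, 'i) mat" and d :: "'k \<Rightarrow> complex" and u v :: "('k \<times> 'i) vec"
  assumes T: "bounded_mat (mat_tensor (diag_mat d) A)" and u: "is_l2 u" and v: "is_l2 v"
  shows "(\<lambda>i. d i * cinner (mat_app A (\<lambda>j. u (i, j))) (\<lambda>j. v (i, j))) summable_on UNIV"
    and "cinner (mat_app (mat_tensor (diag_mat d) A) u) v
           = (\<Sum>\<^sub>\<infinity>i. d i * cinner (mat_app A (\<lambda>j. u (i, j))) (\<lambda>j. v (i, j)))"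
proof -
  define F where "F i j = mat_app (mat_tensor (diag_mat d) A) u (i, j) * cnj (v (i, j))" for i j
  have uncurry: "(\<lambda>(i, j). F i j) = (\<lambda>p. mat_app (mat_tensor (diag_mat d) A) u p * cnj (v p))"
    by (auto simp: F_def)
  have F: "(\<lambda>(i, j). F i j) summable_on Sigma UNIV (\<lambda>_. UNIV)"
    unfolding uncurry using summable_on_mult_l2[OF bounded_mat_is_l2[OF T u] is_l2_cnj[OF v]] by simp
  have row: "(\<Sum>\<^sub>\<infinity>j. F i j) = d i * cinner (mat_app A (\<lambda>j. u (i, j))) (\<lambda>j. v (i, j))" for i
    unfolding F_def tensor_diag_mat_row(2) cinner_def mult.assoc by (rule infsum_cmult_right')
  show "(\<lambda>i. d i * cinner (mat_app A (\<lambda>j. u (i, j))) (\<lambda>j. v (i, j))) summable_on UNIV"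
    using summable_on_Sigma_banach[OF F] unfolding row .
  show "cinner (mat_app (mat_tensor (diag_mat d) A) u) v
           = (\<Sum>\<^sub>\<infinity>i. d i * cinner (mat_app A (\<lambda>j. u (i, j))) (\<lambda>j. v (i, j)))"
    using infsum_Sigma'_banach[OF F] unfolding row uncurry by (simp add: cinner_def)
qed

lemma pos_kernel_tensor_diag_mat:
  fixes K :: "'a \<Rightarrow> 'a \<Rightarrow> ('i, 'i) mat" and d :: "'a \<Rightarrow> 'a \<Rightarrow> 'k \<Rightarrow> complex"
  assumes pk: "pos_kernel \<Omega> K" and d: "\<And>x y i. x \<in> \<Omega> \<Longrightarrow> y \<in> \<Omega> \<Longrightarrow> cmod (d x y i) \<le> M"
    and entry_pos: "\<And>i (n::nat) x w. (\<And>a. a < n \<Longrightarrow> x a \<in> \<Omega>) \<Longrightarrow> (\<And>a. a < n \<Longrightarrow> is_l2 (w a)) \<Longrightarrow>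
       0 \<le> (\<Sum>a<n. \<Sum>b<n. d (x a) (x b) i * cinner (mat_app (K (x a) (x b)) (w b)) (w a))"
  shows "pos_kernel \<Omega> (\<lambda>x y. mat_tensor (diag_mat (d x y)) (K x y))"
  unfolding pos_kernel_iff_kernel_form
proof (intro conjI ballI allI impI)
  show T: "bounded_mat (mat_tensor (diag_mat (d x y)) (K x y))" if "x \<in> \<Omega>" "y \<in> \<Omega>" for x y
    using that by (intro bounded_mat_tensor_diag_mat[where M=M] pos_kernel_bounded[OF pk] d)
  fix n x and e :: "nat \<Rightarrow> ('k \<times> 'i) vec"
  assume xe: "\<forall>k<n. x k \<in> \<Omega> \<and> is_l2 (e k)"
  define g where "g a b i = d (x a) (x b) i *
      cinner (mat_app (K (x a) (x b)) (\<lambda>j. e b (i, j))) (\<lambda>j. e a (i, j))" for a b i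
  have g: "g a b summable_on UNIV"
    and form: "cinner (mat_app (mat_tensor (diag_mat (d (x a) (x b))) (K (x a) (x b))) (e b)) (e a)
                 = (\<Sum>\<^sub>\<infinity>i. g a b i)" if "a < n" "b < n" for a b
    unfolding g_def using xe that by (auto intro!: cinner_tensor_diag_mat T)
  have "kernel_form (\<lambda>x y. mat_tensor (diag_mat (d x y)) (K x y)) n x e
      = (\<Sum>a<n. \<Sum>b<n. \<Sum>\<^sub>\<infinity>i. g a b i)"
    unfolding kernel_form_def by (simp add: form)
  also have "\<dots> = (\<Sum>a<n. \<Sum>\<^sub>\<infinity>i. \<Sum>b<n. g a b i)"
    by (intro sum.cong refl infsum_sum[symmetric]) (auto intro: g)
  also have "\<dots> = (\<Sum>\<^sub>\<infinity>i. \<Sum>a<n. \<Sum>b<n. g a b i)"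
    by (intro infsum_sum[symmetric]) (auto intro!: summable_on_sum g)
  also have "0 \<le> \<dots>"
    unfolding g_def using xe
    by (intro infsum_nonneg_complex summable_on_sum g[unfolded g_def] entry_pos is_l2_slice) auto
  finally show "0 \<le> kernel_form (\<lambda>x y. mat_tensor (diag_mat (d x y)) (K x y)) n x e" .
qed

lemma mat_diff_diag_mat:
  "mat_diff (mat_scale c id_mat) (mat_mult (diag_mat d) (mat_adj (diag_mat d')))
     = diag_mat (\<lambda>i. c - d i * cnj (d' i))"
proof (intro ext)
  fix i k
  have "mat_mult (diag_mat d) (mat_adj (diag_mat d')) i k = d i * cnj (diag_mat d' k i)"
    unfolding mat_mult_def mat_adj_def by (subst infsum_eq_single[where a=i]) (auto simp: diag_mat_def)
  then show "mat_diff (mat_scale c id_mat) (mat_mult (diag_mat d) (mat_adj (diag_mat d'))) i k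
      = diag_mat (\<lambda>i. c - d i * cnj (d' i)) i k"
    unfolding mat_diff_def mat_scale_def id_mat_def by (auto simp: diag_mat_def)
qed

lemma schur_agler_if_one_Hinf_bound:
  assumes "\<forall>x\<in>\<Omega>. bounded_mat (S x)" "1 \<in> Hinf_bounds \<Omega> \<Psi> S"
  shows "S \<in> schur_agler \<Omega> \<Psi>"
proof -
  have "bdd_below (Hinf_bounds \<Omega> \<Psi> S)"
    unfolding Hinf_bounds_def by (rule bdd_belowI[of _ 0]) auto
  then show ?thesis
    using assms cInf_lower unfolding schur_agler_def Hinf_def Hinf_norm_def by blast
qed

lemma diag_mat_schur_agler:
  fixes \<phi> :: "'k \<Rightarrow> 'a \<Rightarrow> complex"
  assumes \<phi>: "\<And>i. scalar_op (\<phi> i) \<in> schur_agler \<Omega> \<Psi>" and \<Psi>: "\<forall>x\<in>\<Omega>. \<forall>\<psi>\<in>\<Psi>. cmod (\<psi> x) \<le> 1"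
  shows "(\<lambda>z. diag_mat (\<lambda>i. \<phi> i z)) \<in> schur_agler \<Omega> \<Psi>"
proof (rule schur_agler_if_one_Hinf_bound)
  have bound: "cmod (\<phi> i z) \<le> 1" if "z \<in> \<Omega>" for i z
    using schur_agler_scalar_norm_le_one[OF \<phi> that] \<Psi> that by blast
  then show "\<forall>z\<in>\<Omega>. bounded_mat (diag_mat (\<lambda>i. \<phi> i z))"
    by (auto intro: bounded_diag_mat)
  have defect_bound: "cmod (1 - \<phi> i x * cnj (\<phi> i y)) \<le> 2" if "x \<in> \<Omega>" "y \<in> \<Omega>" for x y i
  proof -
    have "cmod (1 - \<phi> i x * cnj (\<phi> i y)) \<le> 1 + cmod (\<phi> i x) * cmod (\<phi> i y)"
      using norm_triangle_ineq4[of 1 "\<phi> i x * cnj (\<phi> i y)"] by (simp add: norm_mult)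
    also have "\<dots> \<le> 2"
      using bound[OF that(1), of i] bound[OF that(2), of i] mult_le_one[of "cmod (\<phi> i x)"] by simp
    finally show ?thesis .
  qed
  show "1 \<in> Hinf_bounds \<Omega> \<Psi> (\<lambda>z. diag_mat (\<lambda>i. \<phi> i z))"
    unfolding Hinf_bounds_def mat_diff_diag_mat
  proof (intro CollectI conjI ballI)
    fix K :: "'a \<Rightarrow> 'a \<Rightarrow> ('k, 'k) mat"
    assume K: "K \<in> admissible_kernels \<Omega> \<Psi>"
    then have "pos_kernel \<Omega> K"
      by (simp add: admissible_kernels_def)
    then show "pos_kernel \<Omega> (\<lambda>x y. mat_tensor
        (diag_mat (\<lambda>i. complex_of_real (1\<^sup>2) - \<phi> i x * cnj (\<phi> i y))) (K x y))"
      by (rule pos_kernel_tensor_diag_mat)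
        (use defect_bound schur_agler_kernel_form_nonneg[OF \<phi> K] in simp_all)
  qed simp
qed

theorem lemma3p3:
  fixes \<Omega> :: "(complex ^ 'n) set"
    and \<Psi> :: "(complex ^ 'n \<Rightarrow> complex) set"
    and \<phi> :: "nat \<Rightarrow> complex ^ 'n \<Rightarrow> complex"
  assumes "open \<Omega>" and "connected \<Omega>" and "bounded \<Omega>"
    and "test_functions \<Omega> \<Psi>"
    and "\<forall>n. scalar_op (\<phi> n) \<in> schur_agler \<Omega> \<Psi>"
  shows "\<exists>\<Phi> :: complex ^ 'n \<Rightarrow> (nat, nat) mat.
           \<Phi> \<in> schur_agler \<Omega> \<Psi> \<and>
           (\<forall>i j. \<forall>z\<in>\<Omega>. cinner (mat_app (\<Phi> z) (std_basis i)) (std_basis j)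
                          = (if i = j then \<phi> i z else 0))"
proof -
  \<comment> \<open>of the hypotheses on \<open>\<Omega>\<close> and \<open>\<Psi>\<close>, only the bound \<open>|\<psi>| \<le> 1\<close> on the test functions is used\<close>
  have "\<forall>x\<in>\<Omega>. \<forall>\<psi>\<in>\<Psi>. cmod (\<psi> x) \<le> 1"
    using \<open>test_functions \<Omega> \<Psi>\<close> unfolding test_functions_def by force
  then have "(\<lambda>z. diag_mat (\<lambda>i. \<phi> i z)) \<in> schur_agler \<Omega> \<Psi>"
    using assms(5) by (intro diag_mat_schur_agler) auto
  then show ?thesis
    by (intro exI[of _ "\<lambda>z. diag_mat (\<lambda>i. \<phi> i z)"]) (simp add: cinner_diag_mat_basis)
qed

end
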